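(* Let $(G_1,G_2)$ be a two-player game in which each player has two strategies $A,B$, with payoffs $G_1=\begin{bmatrix}g_1^{AA}&g_1^{AB}\\ g_1^{BA}&g_1^{BB}\end{bmatrix}$, $G_2=\begin{bmatrix}g_2^{AA}&g_2^{AB}\\ g_2^{BA}&g_2^{BB}\end{bmatrix}$ (rows indexed by player 1's strategy, columns by player 2's), and suppose both payoffs are nontrivial, i.e. $(g_1^{AA}-g_1^{BA},\,g_1^{AB}-g_1^{BB})\ne(0,0)$ and $(g_2^{AA}-g_2^{AB},\,g_2^{BA}-g_2^{BB})\ne(0,0)$. Define $\theta_1,\theta_2$ by $\theta_1+\frac{\pi}{4}=\mathrm{arctan2}(g_1^{AA}-g_1^{BA},\,g_1^{AB}-g_1^{BB})$ and $\theta_2+\frac{\pi}{4}=\mathrm{arctan2}(g_2^{AA}-g_2^{AB},\,g_2^{BA}-g_2^{BB})$, and set \[ G^{\mathrm{equil}}_1(\theta_1)=\begin{bmatrix}\frac{1}{\sqrt2}\sin(\theta_1+\frac{\pi}{4})&\frac{1}{\sqrt2}\cos(\theta_1+\frac{\pi}{4})\\ -\frac{1}{\sqrt2}\sin(\theta_1+\frac{\pi}{4})&-\frac{1}{\sqrt2}\cos(\theta_1+\frac{\pi}{4})\end{bmatrix},\qquad G^{\mathrm{equil}}_2(\theta_2)=\begin{bmatrix}\frac{1}{\sqrt2}\sin(\theta_2+\frac{\pi}{4})&-\frac{1}{\sqrt2}\sin(\theta_2+\frac{\pi}{4})\\ \frac{1}{\sqrt2}\cos(\theta_2+\frac{\pi}{4})&-\frac{1}{\sqrt2}\cos(\theta_2+\frac{\pi}{4})\end{bmatrix}.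 \] Then the games $(G_1,G_2)$ and $(G^{\mathrm{equil}}_1(\theta_1),G^{\mathrm{equil}}_2(\theta_2))$ have the same set of Nash equilibria, the same set of correlated equilibria, and the same set of coarse correlated equilibria.
   Context: $\mathrm{arctan2}(y,x)$ is the standard two-argument arctangent, the angle $\alpha$ with $(\cos\alpha,\sin\alpha)=(x,y)/\sqrt{x^2+y^2}$. For a finite game with payoffs $G_p$ on joint strategies $a=(a_p,a_{-p})$: a joint distribution $\sigma$ is a correlated equilibrium if for every player $p$ and all $a''_p\ne a'_p$, $\sum_{a_{-p}}\sigma(a''_p,a_{-p})\big(G_p(a'_p,a_{-p})-G_p(a''_p,a_{-p})\big)\le0$; a coarse correlated equilibrium if for every $p$ and $a'_p$, $\sum_a\sigma(a)\big(G_p(a'_p,a_{-p})-G_p(a)\big)\le0$; a Nash equilibrium is a correlated equilibrium that is a product of independent marginals $\sigma(a)=\prod_q\sigma_q(a_q)$. *)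

theory Defs
  imports "HOL-Analysis.Analysis"
begin

datatype strat = A | B

lemma UNIV_strat: "(UNIV :: strat set) = {A, B}"
  by (auto intro: strat.exhaust)

instance strat :: finite
  by standard (simp add: UNIV_strat)

text \<open>A payoff function of a 2x2 two-player game: first argument is player 1's
  strategy (row), second argument player 2's strategy (column).\<close>
type_synonym payoff = "strat \<Rightarrow> strat \<Rightarrow> real"

text \<open>Standard two-argument arctangent: the angle alpha with
  (cos alpha, sin alpha) = (x,y)/|(x,y)|, principal branch (-pi,pi].\<close>
definition arctan2 :: "real \<Rightarrow> real \<Rightarrow> real" where
  "arctan2 y x = Arg (Complex x y)"

definition is_dist :: "(strat \<times> strat \<Rightarrow> real) \<Rightarrow> bool" where
  "is_dist \<sigma> \<longleftrightarrow> (\<forall>a. \<sigma> a \<ge> 0) \<and> (\<Sum>a\<in>UNIV. \<sigma> a) = 1"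

definition is_marginal :: "(strat \<Rightarrow> real) \<Rightarrow> bool" where
  "is_marginal m \<longleftrightarrow> (\<forall>a. m a \<ge> 0) \<and> (\<Sum>a\<in>UNIV. m a) = 1"

definition correlated_eq :: "payoff \<Rightarrow> payoff \<Rightarrow> (strat \<times> strat \<Rightarrow> real) \<Rightarrow> bool" where
  "correlated_eq G1 G2 \<sigma> \<longleftrightarrow> is_dist \<sigma> \<and>
     (\<forall>a'' a'. a'' \<noteq> a' \<longrightarrow> (\<Sum>b\<in>UNIV. \<sigma> (a'', b) * (G1 a' b - G1 a'' b)) \<le> 0) \<and>
     (\<forall>b'' b'. b'' \<noteq> b' \<longrightarrow> (\<Sum>a\<in>UNIV. \<sigma> (a, b'') * (G2 a b' - G2 a b'')) \<le> 0)"

definition coarse_correlated_eq :: "payoff \<Rightarrow> payoff \<Rightarrow> (strat \<times> strat \<Rightarrow> real) \<Rightarrow> bool" where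
  "coarse_correlated_eq G1 G2 \<sigma> \<longleftrightarrow> is_dist \<sigma> \<and>
     (\<forall>a'. (\<Sum>(a, b)\<in>UNIV. \<sigma> (a, b) * (G1 a' b - G1 a b)) \<le> 0) \<and>
     (\<forall>b'. (\<Sum>(a, b)\<in>UNIV. \<sigma> (a, b) * (G2 a b' - G2 a b)) \<le> 0)"

definition nash_eq :: "payoff \<Rightarrow> payoff \<Rightarrow> (strat \<times> strat \<Rightarrow> real) \<Rightarrow> bool" where
  "nash_eq G1 G2 \<sigma> \<longleftrightarrow> correlated_eq G1 G2 \<sigma> \<and>
     (\<exists>m1 m2. is_marginal m1 \<and> is_marginal m2 \<and> (\<forall>a b. \<sigma> (a, b) = m1 a * m2 b))"

definition Gequil1 :: "real \<Rightarrow> payoff" where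
  "Gequil1 \<theta> = (\<lambda>a b.
     (if a = A then 1 else -1) / sqrt 2 *
     (if b = A then sin (\<theta> + pi/4) else cos (\<theta> + pi/4)))"

definition Gequil2 :: "real \<Rightarrow> payoff" where
  "Gequil2 \<theta> = (\<lambda>a b.
     (if b = A then 1 else -1) / sqrt 2 *
     (if a = A then sin (\<theta> + pi/4) else cos (\<theta> + pi/4)))"

end

theory Submission
  imports Defs
begin

(* All three equilibrium notions see the payoffs only through the deviation gains
   G1 a' b - G1 a b and G2 a b' - G2 a b, and only through the signs of linear combinations
   of them with weights taken from sigma.  Hence they are invariant under strategic
   equivalence: rescaling a player's payoff by a positive constant and adding a function of
   the opponent's strategy.  With two strategies the gains of player 1 are determined by the
   vector v = (G1 A A - G1 B A, G1 A B - G1 B B), and the gain vector of Gequil1 theta1 is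
   sqrt 2 (sin, cos) (theta1 + pi/4) = (sqrt 2 / |v|) v by the choice of theta1; likewise
   for player 2. *)

definition strategically_equivalent :: "payoff \<Rightarrow> payoff \<Rightarrow> payoff \<Rightarrow> payoff \<Rightarrow> bool" where
  "strategically_equivalent G1 G2 H1 H2 \<longleftrightarrow>
     (\<exists>c1 > 0. \<exists>f1. \<forall>a b. H1 a b = c1 * G1 a b + f1 b) \<and>
     (\<exists>c2 > 0. \<exists>f2. \<forall>a b. H2 a b = c2 * G2 a b + f2 a)"

lemma sum_scaled_nonpos_iff:
  fixes c :: real
  assumes "c > 0"
  shows "(\<Sum>x\<in>S. c * f x) \<le> 0 \<longleftrightarrow> (\<Sum>x\<in>S. f x) \<le> 0"
  using assms by (simp add: sum_distrib_left[symmetric] mult_le_0_iff)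

lemma strategically_equivalentE:
  assumes "strategically_equivalent G1 G2 H1 H2"
  obtains c1 c2 where "c1 > 0" "c2 > 0"
    and "\<And>a' a b. H1 a' b - H1 a b = c1 * (G1 a' b - G1 a b)"
    and "\<And>a b' b. H2 a b' - H2 a b = c2 * (G2 a b' - G2 a b)"
  using assms unfolding strategically_equivalent_def by (auto simp: algebra_simps)

lemma correlated_eq_strategically_equivalent:
  assumes "strategically_equivalent G1 G2 H1 H2"
  shows "correlated_eq H1 H2 \<sigma> \<longleftrightarrow> correlated_eq G1 G2 \<sigma>"
proof -
  obtain c1 c2 where "c1 > 0" "c2 > 0"
    and gain1: "\<And>a' a b. H1 a' b - H1 a b = c1 * (G1 a' b - G1 a b)"
    and gain2: "\<And>a b' b. H2 a b' - H2 a b = c2 * (G2 a b' - G2 a b)"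
    using assms by (rule strategically_equivalentE) blast
  then show ?thesis
    by (simp add: correlated_eq_def gain1 gain2 mult.left_commute sum_scaled_nonpos_iff)
qed

lemma coarse_correlated_eq_strategically_equivalent:
  assumes "strategically_equivalent G1 G2 H1 H2"
  shows "coarse_correlated_eq H1 H2 \<sigma> \<longleftrightarrow> coarse_correlated_eq G1 G2 \<sigma>"
proof -
  obtain c1 c2 where "c1 > 0" "c2 > 0"
    and gain1: "\<And>a' a b. H1 a' b - H1 a b = c1 * (G1 a' b - G1 a b)"
    and gain2: "\<And>a b' b. H2 a b' - H2 a b = c2 * (G2 a b' - G2 a b)"
    using assms by (rule strategically_equivalentE) blast
  then show ?thesis
    by (simp add: coarse_correlated_eq_def gain1 gain2 mult.left_commute case_prod_unfold
        sum_scaled_nonpos_iff)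
qed

lemma nash_eq_strategically_equivalent:
  assumes "strategically_equivalent G1 G2 H1 H2"
  shows "nash_eq H1 H2 \<sigma> \<longleftrightarrow> nash_eq G1 G2 \<sigma>"
  using correlated_eq_strategically_equivalent[OF assms] by (simp add: nash_eq_def)

lemma strategically_equivalent_if_gains_scaled:
  assumes "c1 > 0" "c2 > 0"
    and "\<And>b. H1 A b - H1 B b = c1 * (G1 A b - G1 B b)"
    and "\<And>a. H2 a A - H2 a B = c2 * (G2 a A - G2 a B)"
  shows "strategically_equivalent G1 G2 H1 H2"
proof -
  have "H1 a b = c1 * G1 a b + (H1 B b - c1 * G1 B b)" for a b
    using assms(3)[of b] by (cases a) (simp_all add: algebra_simps)
  moreover have "H2 a b = c2 * G2 a b + (H2 a B - c2 * G2 a B)" for a b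
    using assms(4)[of a] by (cases b) (simp_all add: algebra_simps)
  ultimately show ?thesis
    unfolding strategically_equivalent_def using assms(1,2) by meson
qed

lemma sin_arctan2: "sin (arctan2 y x) = y / cmod (Complex x y)"
  using sin_Arg[of "Complex x y"] by (cases "Complex x y = 0") (simp_all add: arctan2_def Arg_zero)

lemma cos_arctan2:
  assumes "(y, x) \<noteq> (0, 0)"
  shows "cos (arctan2 y x) = x / cmod (Complex x y)"
proof -
  have "Complex x y \<noteq> 0"
    using assms by (auto simp: complex_eq_iff)
  then show ?thesis
    using cos_Arg by (simp add: arctan2_def)
qed

lemma Gequil1_gain:
  "Gequil1 \<theta> A b - Gequil1 \<theta> B b
     = sqrt 2 * (if b = A then sin (\<theta> + pi/4) else cos (\<theta> + pi/4))"
  unfolding Gequil1_def by (simp add: field_simps)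

lemma Gequil2_gain:
  "Gequil2 \<theta> a A - Gequil2 \<theta> a B
     = sqrt 2 * (if a = A then sin (\<theta> + pi/4) else cos (\<theta> + pi/4))"
  unfolding Gequil2_def by (simp add: field_simps)

theorem mainTheorem3:
  fixes G1 G2 :: payoff and \<theta>1 \<theta>2 :: real
  assumes nt1: "(G1 A A - G1 B A, G1 A B - G1 B B) \<noteq> (0, 0)"
    and nt2: "(G2 A A - G2 A B, G2 B A - G2 B B) \<noteq> (0, 0)"
    and th1: "\<theta>1 + pi/4 = arctan2 (G1 A A - G1 B A) (G1 A B - G1 B B)"
    and th2: "\<theta>2 + pi/4 = arctan2 (G2 A A - G2 A B) (G2 B A - G2 B B)"
  shows "{\<sigma>. nash_eq G1 G2 \<sigma>} = {\<sigma>. nash_eq (Gequil1 \<theta>1) (Gequil2 \<theta>2) \<sigma>}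
       \<and> {\<sigma>. correlated_eq G1 G2 \<sigma>} = {\<sigma>. correlated_eq (Gequil1 \<theta>1) (Gequil2 \<theta>2) \<sigma>}
       \<and> {\<sigma>. coarse_correlated_eq G1 G2 \<sigma>}
           = {\<sigma>. coarse_correlated_eq (Gequil1 \<theta>1) (Gequil2 \<theta>2) \<sigma>}"
proof -
  define r1 where "r1 = cmod (Complex (G1 A B - G1 B B) (G1 A A - G1 B A))"
  define r2 where "r2 = cmod (Complex (G2 B A - G2 B B) (G2 A A - G2 A B))"
  have "sqrt 2 / r1 > 0" "sqrt 2 / r2 > 0"
    using nt1 nt2 by (auto simp: r1_def r2_def complex_eq_iff)
  moreover have "Gequil1 \<theta>1 A b - Gequil1 \<theta>1 B b = sqrt 2 / r1 * (G1 A b - G1 B b)" for b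
    using sin_arctan2 cos_arctan2[OF nt1] by (cases b) (simp_all add: Gequil1_gain th1 r1_def)
  moreover have "Gequil2 \<theta>2 a A - Gequil2 \<theta>2 a B = sqrt 2 / r2 * (G2 a A - G2 a B)" for a
    using sin_arctan2 cos_arctan2[OF nt2] by (cases a) (simp_all add: Gequil2_gain th2 r2_def)
  ultimately have "strategically_equivalent G1 G2 (Gequil1 \<theta>1) (Gequil2 \<theta>2)"
    by (rule strategically_equivalent_if_gains_scaled)
  then show ?thesis
    by (simp add: set_eq_iff nash_eq_strategically_equivalent correlated_eq_strategically_equivalent
        coarse_correlated_eq_strategically_equivalent)
qed

end
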